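(* Let $R\subseteq\mathbb{R}^2$ be open and let $f:R\to\mathbb{R}^2$ be $C^1$. Let $V$ be a connected component of $\mathbb{R}^2\setminus(f(S)\cup C(f))$ and let $N_0=\mathrm{Val}(f,V)$. Let $w_0\in\partial V\setminus\overline{f(S)}$. Then $\mathrm{Val}(f,w_0)\le N_0$.
   Context: Write $f=(u,v)$; $J_f=u_xv_y-u_yv_x$ and $S=\{z\in R: J_f(z)=0\}$. $C(f)$ is the set of finite points $\zeta\in\mathbb{R}^2$ for which there is a sequence $(z_n)\subset R$ converging to a point of $\partial R$ or with $|z_n|\to\infty$, such that $f(z_n)\to\zeta$. $\mathrm{Val}(f,w)$ is the number (possibly infinite) of distinct $z\in R$ with $f(z)=w$, and for a set $V$, $\mathrm{Val}(f,V)=\sup_{w\in V}\mathrm{Val}(f,w)$. *)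

theory Defs
  imports "HOL-Analysis.Analysis" "HOL-Library.Extended_Nat"
begin

definition is_C1_on :: "(real^2) set \<Rightarrow> (real^2 \<Rightarrow> real^2) \<Rightarrow> bool" where
  "is_C1_on R f \<longleftrightarrow> f differentiable_on R \<and> continuous_on R (\<lambda>z. jacobian f (at z))"

definition Jac :: "(real^2 \<Rightarrow> real^2) \<Rightarrow> real^2 \<Rightarrow> real" where
  "Jac f z = det (jacobian f (at z))"

definition crit_set :: "(real^2) set \<Rightarrow> (real^2 \<Rightarrow> real^2) \<Rightarrow> (real^2) set" where
  "crit_set R f = {z \<in> R. Jac f z = 0}"

definition cluster_set :: "(real^2) set \<Rightarrow> (real^2 \<Rightarrow> real^2) \<Rightarrow> (real^2) set" where
  "cluster_set R f = {\<zeta>. \<exists>zs :: nat \<Rightarrow> real^2. (\<forall>n. zs n \<in> R) \<and>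
      ((\<exists>p \<in> frontier R. zs \<longlonglongrightarrow> p) \<or> filterlim (\<lambda>n. norm (zs n)) at_top sequentially) \<and>
      (\<lambda>n. f (zs n)) \<longlonglongrightarrow> \<zeta>}"

definition Val :: "(real^2) set \<Rightarrow> (real^2 \<Rightarrow> real^2) \<Rightarrow> real^2 \<Rightarrow> enat" where
  "Val R f w = (if finite {z \<in> R. f z = w} then enat (card {z \<in> R. f z = w}) else \<infinity>)"

definition Val_set :: "(real^2) set \<Rightarrow> (real^2 \<Rightarrow> real^2) \<Rightarrow> (real^2) set \<Rightarrow> enat" where
  "Val_set R f V = (SUP w\<in>V. Val R f w)"

end

theory Submission
  imports Defs
begin

text \<open>Each of finitely many preimages of the regular value \<open>w0\<close> gets its own small ball, and the
  balls are pairwise disjoint. Since the Jacobian does not vanish there, the image of every such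
  ball is a neighbourhood of \<open>w0\<close>; so all \<open>w\<close> close to \<open>w0\<close> have at least as many preimages as
  \<open>w0\<close>, one in each ball. As \<open>w0\<close> lies in the closure of \<open>V\<close>, some of these \<open>w\<close> lie in \<open>V\<close>.\<close>

lemma nonsingular_jacobian_imp_interior_image:
  fixes f :: "real^'n \<Rightarrow> real^'n"
  assumes "open S" "f differentiable_on S" "x \<in> S" "det (jacobian f (at x)) \<noteq> 0"
    and "T \<subseteq> S" "x \<in> interior T"
  shows "f x \<in> interior (f ` T)"
proof -
  have "f differentiable (at x)"
    using assms(1-3) by (simp add: differentiable_on_eq_differentiable_at)
  then have deriv: "(f has_derivative (\<lambda>h. jacobian f (at x) *v h)) (at x)"
    using jacobian_works by blast
  obtain B where B: "jacobian f (at x) ** B = mat 1"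
    using assms(4) invertible_det_nz invertible_def by blast
  have "bounded_linear (\<lambda>h. B *v h)"
    using matrix_vector_mul_linear linear_conv_bounded_linear by blast
  moreover have "(\<lambda>h. jacobian f (at x) *v h) \<circ> (\<lambda>h. B *v h) = id"
    by (rule ext) (simp add: matrix_vector_mul_assoc B)
  ultimately show ?thesis
    using sussmann_open_mapping[OF assms(1) differentiable_imp_continuous_on[OF assms(2)]
        assms(3) deriv _ _ assms(5,6)]
    by blast
qed

lemma finite_subset_open_disjoint_balls:
  fixes F :: "'a::metric_space set"
  assumes "open S" "finite F" "F \<subseteq> S"
  obtains r where "r > 0" "\<And>z. z \<in> F \<Longrightarrow> ball z r \<subseteq> S"
    "\<And>a b. a \<in> F \<Longrightarrow> b \<in> F \<Longrightarrow> a \<noteq> b \<Longrightarrow> ball a r \<inter> ball b r = {}"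
proof -
  have inside: "\<forall>\<^sub>F r in at_right 0. ball z r \<subseteq> S" if "z \<in> F" for z
  proof -
    have "z \<in> S" using assms(3) that by blast
    then obtain d where "d > 0" "ball z d \<subseteq> S"
      using assms(1) openE by blast
    then show ?thesis
      unfolding eventually_at_right_field by (metis order.strict_implies_order subset_ball subset_trans)
  qed
  have apart: "\<forall>\<^sub>F r in at_right 0. a \<noteq> b \<longrightarrow> ball a r \<inter> ball b r = {}" for a b :: 'a
  proof (cases "a = b")
    case False
    then show ?thesis
      unfolding eventually_at_right_field
      by (intro exI[of _ "dist a b / 2"]) (auto intro!: disjoint_ballI)
  qed simp
  have "\<forall>\<^sub>F r in at_right (0::real). r > 0 \<and> (\<forall>z\<in>F. ball z r \<subseteq> S)
      \<and> (\<forall>a\<in>F. \<forall>b\<in>F. a \<noteq> b \<longrightarrow> ball a r \<inter> ball b r = {})"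
    using assms(2)
    by (intro eventually_conj eventually_at_right_less eventually_ball_finite ballI inside apart)
  then show ?thesis
    using that eventually_happens[of _ "at_right (0::real)"] by force
qed

lemma card_le_Val_if_inj_on:
  assumes "finite F" "inj_on g F" "g ` F \<subseteq> {z \<in> R. f z = w}"
  shows "enat (card F) \<le> Val R f w"
proof (cases "finite {z \<in> R. f z = w}")
  case True
  then have "card (g ` F) \<le> card {z \<in> R. f z = w}"
    using assms(3) by (rule card_mono)
  then show ?thesis
    using True assms(2) by (simp add: Val_def card_image)
qed (simp add: Val_def)

lemma Val_le_if_finite_subsets:
  assumes "\<And>F. finite F \<Longrightarrow> F \<subseteq> {z \<in> R. f z = w} \<Longrightarrow> enat (card F) \<le> X"
  shows "Val R f w \<le> X"
proof (cases "finite {z \<in> R. f z = w}")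
  case True
  then show ?thesis using assms by (simp add: Val_def)
next
  case False
  have large: "enat m \<le> X" for m
  proof -
    obtain F where "finite F" "card F = m" "F \<subseteq> {z \<in> R. f z = w}"
      using infinite_arbitrarily_large[OF False] by blast
    then show ?thesis using assms by blast
  qed
  show ?thesis
  proof (cases X)
    case (enat n)
    then show ?thesis using large[of "Suc n"] by simp
  qed simp
qed

lemma card_le_Val_near_regular_value:
  assumes "open R" "f differentiable_on R" "w0 \<notin> f ` crit_set R f"
    and "finite F" "F \<subseteq> {z \<in> R. f z = w0}"
  obtains U where "open U" "w0 \<in> U" "\<And>w. w \<in> U \<Longrightarrow> enat (card F) \<le> Val R f w"
proof -
  obtain r where r: "r > 0" "\<And>z. z \<in> F \<Longrightarrow> ball z r \<subseteq> R"
    "\<And>a b. a \<in> F \<Longrightarrow> b \<in> F \<Longrightarrow> a \<noteq> b \<Longrightarrow> ball a r \<inter> ball b r = {}"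
    using finite_subset_open_disjoint_balls[OF assms(1,4)] assms(5) by blast
  define U where "U = (\<Inter>z\<in>F. interior (f ` ball z r))"
  have "w0 \<in> interior (f ` ball z r)" if "z \<in> F" for z
  proof -
    have "z \<in> R" "f z = w0" using that assms(5) by auto
    then have "Jac f z \<noteq> 0" using assms(3) by (auto simp: crit_set_def)
    then show ?thesis
      using nonsingular_jacobian_imp_interior_image[OF assms(1,2) \<open>z \<in> R\<close>, of "ball z r"]
        \<open>f z = w0\<close> r(1,2) that
      by (simp add: Jac_def interior_open)
  qed
  then have "open U" "w0 \<in> U" using assms(4) by (auto simp: U_def)
  moreover have "enat (card F) \<le> Val R f w" if "w \<in> U" for w
  proof -
    have "\<forall>z\<in>F. \<exists>x \<in> ball z r. f x = w"
      using that interior_subset by (fastforce simp: U_def)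
    then obtain g where g: "\<And>z. z \<in> F \<Longrightarrow> g z \<in> ball z r \<and> f (g z) = w" by metis
    have "inj_on g F"
      using g r(3) by (fastforce intro: inj_onI)
    moreover have "g ` F \<subseteq> {z \<in> R. f z = w}"
      using g r(2) by blast
    ultimately show ?thesis
      using assms(4) card_le_Val_if_inj_on by blast
  qed
  ultimately show ?thesis using that by blast
qed

theorem theorem3p7:
  fixes R :: "(real^2) set" and f :: "real^2 \<Rightarrow> real^2"
    and V :: "(real^2) set" and w0 :: "real^2"
  assumes "open R"
    and "is_C1_on R f"
    and "V \<in> components (UNIV - (f ` crit_set R f \<union> cluster_set R f))"
    and "w0 \<in> frontier V - closure (f ` crit_set R f)"
  shows "Val R f w0 \<le> Val_set R f V"
proof (rule Val_le_if_finite_subsets)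
  fix F assume F: "finite F" "F \<subseteq> {z \<in> R. f z = w0}"
  have "w0 \<in> closure V" "w0 \<notin> f ` crit_set R f"
    using assms(4) closure_subset[of "f ` crit_set R f"] by (auto simp: frontier_def)
  obtain U where U: "open U" "w0 \<in> U" "\<And>w. w \<in> U \<Longrightarrow> enat (card F) \<le> Val R f w"
    using card_le_Val_near_regular_value[OF assms(1) _ \<open>w0 \<notin> _\<close> F] assms(2)
    by (auto simp: is_C1_on_def)
  then obtain w where "w \<in> U" "w \<in> V"
    using \<open>w0 \<in> closure V\<close> open_Int_closure_eq_empty by blast
  then show "enat (card F) \<le> Val_set R f V"
    unfolding Val_set_def using U(3) by (blast intro: SUP_upper2)
qed

end
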